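(* Let $n = \sum_{i=1}^{k} n_i h_i$ and suppose a holey self-orthogonal latin square HSOLS$(h_1^{n_1}\cdots h_k^{n_k})$ of order $n$ exists. Suppose moreover that for each $i \in \{1,\dots,k\}$ there exist complete mixed doubles round robin tournaments CMDRR$(h_i, m_{i1}), \dots,$ CMDRR$(h_i, m_{i n_i})$. Then there exists a CMDRR$(n, s)$, where $s = \sum_{1 \le i \le k}\sum_{1 \le j \le n_i} m_{ij}$.
   Context: A mixed doubles game is a match between two teams, each team consisting of one man and one woman; in a game $M_a F_b$ v $M_c F_d$, $M_a$ and $F_b$ are partners, $M_c$ and $F_d$ are partners, and each player of one team opposes each player of the other team. A complete mixed doubles round robin tournament CMDRR$(n,k)$ is a schedule (set) of mixed doubles games for $n$ men and $n$ women, of which $k$ men and $k$ women are paired into $k$ spouse pairs (a spouse pair is one man and one woman), such that: spouses never play in a game together as partners or opponents; every man and woman who are not spouses are partners exactly once and opponents exactly once; each player who has a spouse opposes every other player of the same sex exactly once; each player who does not have a spouse opposes some other same-sex player who does not have a spouse exactly twice and opposes all other same-sex players exactly once. By convention a CMDRR$(1,1)$ exists (one spouse pair and no games). A self-orthogonal latin square (SOLS) is a latin square orthogonal to its transpose. A holey SOLS HSOLS$(h_1^{n_1}\cdots h_k^{n_k})$ is a self-orthogonal latin square of order $n=\sum n_i h_i$ with, for each $i$, $n_i$ missing sub-SOLS (holes) of order $h_i$, the holes being disjoint and spanning (i.e. the symbol set is partitioned into the holes, and the cells indexed by pairs of rows/columns from the same hole are empty and the symbols of a hole do not occur in that hole's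 rows or columns). *)

theory Defs
  imports Main
begin

(* A game  M_a F_b v M_c F_d  is represented as ((a,b),(c,d)). Men and women of a
   CMDRR(n,_) are both numbered 0..<n; the spouse pairs form a set S of (man,woman). *)
type_synonym game = "(nat \<times> nat) \<times> (nat \<times> nat)"

definition plays_man :: "nat \<Rightarrow> game \<Rightarrow> bool" where
  "plays_man m g = (case g of ((a,b),(c,d)) \<Rightarrow> m = a \<or> m = c)"

definition plays_woman :: "nat \<Rightarrow> game \<Rightarrow> bool" where
  "plays_woman w g = (case g of ((a,b),(c,d)) \<Rightarrow> w = b \<or> w = d)"

definition partners_in :: "nat \<Rightarrow> nat \<Rightarrow> game \<Rightarrow> bool" where
  "partners_in m w g = (case g of ((a,b),(c,d)) \<Rightarrow> (m = a \<and> w = b) \<or> (m = c \<and> w = d))"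

definition opp_mw_in :: "nat \<Rightarrow> nat \<Rightarrow> game \<Rightarrow> bool" where
  "opp_mw_in m w g = (case g of ((a,b),(c,d)) \<Rightarrow> (m = a \<and> w = d) \<or> (m = c \<and> w = b))"

definition opp_men_in :: "nat \<Rightarrow> nat \<Rightarrow> game \<Rightarrow> bool" where
  "opp_men_in m m' g = (case g of ((a,b),(c,d)) \<Rightarrow> (m = a \<and> m' = c) \<or> (m = c \<and> m' = a))"

definition opp_women_in :: "nat \<Rightarrow> nat \<Rightarrow> game \<Rightarrow> bool" where
  "opp_women_in w w' g = (case g of ((a,b),(c,d)) \<Rightarrow> (w = b \<and> w' = d) \<or> (w = d \<and> w' = b))"

definition is_CMDRR :: "nat \<Rightarrow> nat \<Rightarrow> (nat \<times> nat) set \<Rightarrow> game set \<Rightarrow> bool" where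
  "is_CMDRR n k S G \<longleftrightarrow>
     finite G \<and>
     (\<forall>((a,b),(c,d)) \<in> G. a < n \<and> b < n \<and> c < n \<and> d < n \<and> a \<noteq> c \<and> b \<noteq> d) \<and>
     S \<subseteq> {0..<n} \<times> {0..<n} \<and>
     (\<forall>(m,w) \<in> S. \<forall>(m',w') \<in> S. (m = m' \<longleftrightarrow> w = w')) \<and>
     card S = k \<and>
     (\<forall>(m,w) \<in> S. \<forall>g \<in> G. \<not> (plays_man m g \<and> plays_woman w g)) \<and>
     (\<forall>m < n. \<forall>w < n. (m,w) \<notin> S \<longrightarrow>
        card {g \<in> G. partners_in m w g} = 1 \<and> card {g \<in> G. opp_mw_in m w g} = 1) \<and>
     (\<forall>m < n. m \<in> fst ` S \<longrightarrow>
        (\<forall>m' < n. m' \<noteq> m \<longrightarrow> card {g \<in> G. opp_men_in m m' g} = 1)) \<and>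
     (\<forall>w < n. w \<in> snd ` S \<longrightarrow>
        (\<forall>w' < n. w' \<noteq> w \<longrightarrow> card {g \<in> G. opp_women_in w w' g} = 1)) \<and>
     (\<forall>m < n. m \<notin> fst ` S \<longrightarrow>
        (\<exists>m' < n. m' \<noteq> m \<and> m' \<notin> fst ` S \<and> card {g \<in> G. opp_men_in m m' g} = 2 \<and>
           (\<forall>m'' < n. m'' \<noteq> m \<and> m'' \<noteq> m' \<longrightarrow> card {g \<in> G. opp_men_in m m'' g} = 1))) \<and>
     (\<forall>w < n. w \<notin> snd ` S \<longrightarrow>
        (\<exists>w' < n. w' \<noteq> w \<and> w' \<notin> snd ` S \<and> card {g \<in> G. opp_women_in w w' g} = 2 \<and>
           (\<forall>w'' < n. w'' \<noteq> w \<and> w'' \<noteq> w' \<longrightarrow> card {g \<in> G. opp_women_in w w'' g} = 1)))"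

definition CMDRR_exists :: "nat \<Rightarrow> nat \<Rightarrow> bool" where
  "CMDRR_exists n k \<longleftrightarrow> (\<exists>S G. is_CMDRR n k S G)"

(* L x y is the entry of cell (x,y); it is only meaningful for filled cells, i.e. cells
   whose row and column do not lie in a common hole. *)
definition same_hole :: "'i set \<Rightarrow> ('i \<Rightarrow> nat set) \<Rightarrow> nat \<Rightarrow> nat \<Rightarrow> bool" where
  "same_hole I Hf x y \<longleftrightarrow> (\<exists>i \<in> I. x \<in> Hf i \<and> y \<in> Hf i)"

definition is_HSOLS :: "nat set \<Rightarrow> 'i set \<Rightarrow> ('i \<Rightarrow> nat set) \<Rightarrow> (nat \<Rightarrow> nat \<Rightarrow> nat) \<Rightarrow> bool" where
  "is_HSOLS X I Hf L \<longleftrightarrow>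
     finite X \<and>
     (\<forall>i \<in> I. Hf i \<subseteq> X) \<and>
     (\<forall>i \<in> I. \<forall>j \<in> I. i \<noteq> j \<longrightarrow> Hf i \<inter> Hf j = {}) \<and>
     (\<Union>i \<in> I. Hf i) = X \<and>
     \<comment> \<open>latin property: row/column x in hole H contains each symbol of X - H exactly once\<close>
     (\<forall>i \<in> I. \<forall>x \<in> Hf i. bij_betw (\<lambda>y. L x y) (X - Hf i) (X - Hf i)) \<and>
     (\<forall>i \<in> I. \<forall>y \<in> Hf i. bij_betw (\<lambda>x. L x y) (X - Hf i) (X - Hf i)) \<and>
     \<comment> \<open>self-orthogonality: superimposing L and its transpose gives every pair of symbols
        not in a common hole exactly once\<close>
     bij_betw (\<lambda>(x,y). (L x y, L y x))
       {(x,y). x \<in> X \<and> y \<in> X \<and> \<not> same_hole I Hf x y}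
       {(u,v). u \<in> X \<and> v \<in> X \<and> \<not> same_hole I Hf u v}"

definition HSOLS_type_exists :: "nat \<Rightarrow> (nat \<Rightarrow> nat) \<Rightarrow> (nat \<Rightarrow> nat) \<Rightarrow> bool" where
  "HSOLS_type_exists k h nn \<longleftrightarrow>
     (\<exists>Hf L. is_HSOLS {0..<(\<Sum>i=1..k. nn i * h i)} {(i,j). i \<in> {1..k} \<and> j \<in> {1..nn i}} Hf L \<and>
        (\<forall>i \<in> {1..k}. \<forall>j \<in> {1..nn i}. card (Hf (i,j)) = h i))"

end

theory Submission
  imports Defs
begin

text \<open>Fill each hole of the HSOLS with a copy of a given CMDRR on its players, and
  turn every pair of filled cells (x,y), (y,x) into the game M_x F_{L x y} v M_y F_{L y x}.
  A pair of players from a common hole meets only inside that hole's tournament. For players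
  from different holes, the latin property of row x makes man x partner each such woman exactly
  once, that of column x makes him oppose her exactly once, and self-orthogonality makes every
  such pair of women oppose exactly once. So the spouse pairs of the result are those of the holes.\<close>

text \<open>The same-sex conditions of a CMDRR; \<open>F\<close> is the set of players of that sex who have a spouse.\<close>

definition balanced_opposition ::
    "nat set \<Rightarrow> nat set \<Rightarrow> (nat \<Rightarrow> nat \<Rightarrow> game \<Rightarrow> bool) \<Rightarrow> game set \<Rightarrow> bool" where
  "balanced_opposition A F R G \<longleftrightarrow>
     (\<forall>m \<in> A. m \<in> F \<longrightarrow> (\<forall>m' \<in> A. m' \<noteq> m \<longrightarrow> card {g \<in> G. R m m' g} = 1)) \<and>
     (\<forall>m \<in> A. m \<notin> F \<longrightarrow>
        (\<exists>m' \<in> A. m' \<noteq> m \<and> m' \<notin> F \<and> card {g \<in> G. R m m' g} = 2 \<and>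
           (\<forall>m'' \<in> A. m'' \<noteq> m \<and> m'' \<noteq> m' \<longrightarrow> card {g \<in> G. R m m'' g} = 1)))"

definition is_CMDRR_on :: "nat set \<Rightarrow> (nat \<times> nat) set \<Rightarrow> game set \<Rightarrow> bool" where
  "is_CMDRR_on A S G \<longleftrightarrow>
     finite G \<and>
     (\<forall>((a,b),(c,d)) \<in> G. a \<in> A \<and> b \<in> A \<and> c \<in> A \<and> d \<in> A \<and> a \<noteq> c \<and> b \<noteq> d) \<and>
     S \<subseteq> A \<times> A \<and>
     (\<forall>(m,w) \<in> S. \<forall>(m',w') \<in> S. m = m' \<longleftrightarrow> w = w') \<and>
     (\<forall>(m,w) \<in> S. \<forall>g \<in> G. \<not> (plays_man m g \<and> plays_woman w g)) \<and>
     (\<forall>m \<in> A. \<forall>w \<in> A. (m,w) \<notin> S \<longrightarrow>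
        card {g \<in> G. partners_in m w g} = 1 \<and> card {g \<in> G. opp_mw_in m w g} = 1) \<and>
     balanced_opposition A (fst ` S) opp_men_in G \<and>
     balanced_opposition A (snd ` S) opp_women_in G"

lemma is_CMDRR_iff: "is_CMDRR n k S G \<longleftrightarrow> is_CMDRR_on {0..<n} S G \<and> card S = k"
  unfolding is_CMDRR_def is_CMDRR_on_def balanced_opposition_def atLeastLessThan_iff
  by (simp only: Ball_def Bex_def) auto

lemma is_CMDRR_onD:
  assumes "is_CMDRR_on A S G"
  shows "finite G"
    and "\<forall>((a,b),(c,d)) \<in> G. a \<in> A \<and> b \<in> A \<and> c \<in> A \<and> d \<in> A \<and> a \<noteq> c \<and> b \<noteq> d"
    and "S \<subseteq> A \<times> A"
    and "\<forall>(m,w) \<in> S. \<forall>(m',w') \<in> S. m = m' \<longleftrightarrow> w = w'"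
    and "\<forall>(m,w) \<in> S. \<forall>g \<in> G. \<not> (plays_man m g \<and> plays_woman w g)"
    and "\<forall>m \<in> A. \<forall>w \<in> A. (m,w) \<notin> S \<longrightarrow>
        card {g \<in> G. partners_in m w g} = 1 \<and> card {g \<in> G. opp_mw_in m w g} = 1"
    and "balanced_opposition A (fst ` S) opp_men_in G"
    and "balanced_opposition A (snd ` S) opp_women_in G"
  by (insert assms, unfold is_CMDRR_on_def, elim conjE, assumption)+

lemma game_cases: obtains a b c d where "g = ((a,b),(c,d))"
  by (metis prod.exhaust)

definition game_players :: "game \<Rightarrow> nat set" where
  "game_players g = (case g of ((a,b),(c,d)) \<Rightarrow> {a,b,c,d})"

lemma game_players_related:
  assumes "Q \<in> {partners_in, opp_mw_in, opp_men_in, opp_women_in}" "Q u v g"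
  shows "u \<in> game_players g \<and> v \<in> game_players g"
  using assms by (cases g rule: game_cases)
    (auto simp: game_players_def partners_in_def opp_mw_in_def opp_men_in_def opp_women_in_def)

lemma game_players_plays:
  "plays_man u g \<Longrightarrow> u \<in> game_players g" "plays_woman u g \<Longrightarrow> u \<in> game_players g"
  by (cases g rule: game_cases; auto simp: game_players_def plays_man_def plays_woman_def)+

definition map_game :: "(nat \<Rightarrow> nat) \<Rightarrow> game \<Rightarrow> game" where
  "map_game f = map_prod (map_prod f f) (map_prod f f)"

lemma inj_on_map_game: "inj_on f A \<Longrightarrow> inj_on (map_game f) ((A \<times> A) \<times> (A \<times> A))"
  unfolding map_game_def by (intro map_prod_inj_on)

lemma map_game_preds:
  assumes "inj_on f A" "game_players g \<subseteq> A" "u \<in> A" "v \<in> A"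
  shows "partners_in (f u) (f v) (map_game f g) \<longleftrightarrow> partners_in u v g"
    and "opp_mw_in (f u) (f v) (map_game f g) \<longleftrightarrow> opp_mw_in u v g"
    and "opp_men_in (f u) (f v) (map_game f g) \<longleftrightarrow> opp_men_in u v g"
    and "opp_women_in (f u) (f v) (map_game f g) \<longleftrightarrow> opp_women_in u v g"
    and "plays_man (f u) (map_game f g) \<longleftrightarrow> plays_man u g"
    and "plays_woman (f u) (map_game f g) \<longleftrightarrow> plays_woman u g"
  using assms by (cases g rule: game_cases; auto simp: map_game_def game_players_def partners_in_def opp_mw_in_def
      opp_men_in_def opp_women_in_def plays_man_def plays_woman_def inj_on_eq_iff)+

lemma card_image_Collect:
  assumes "inj_on h G" "\<And>g. g \<in> G \<Longrightarrow> Q' (h g) \<longleftrightarrow> Q g"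
  shows "card {g' \<in> h ` G. Q' g'} = card {g \<in> G. Q g}"
proof -
  have "{g' \<in> h ` G. Q' g'} = h ` {g \<in> G. Q g}"
    using assms(2) by auto
  then show ?thesis
    using card_image[OF inj_on_subset[OF assms(1)]] by auto
qed

lemma balanced_opposition_image:
  assumes bal: "balanced_opposition A F R G" and inj: "inj_on f A" and "F \<subseteq> A"
    and card_eq: "\<And>u v. u \<in> A \<Longrightarrow> v \<in> A \<Longrightarrow> card {g \<in> G'. R (f u) (f v) g} = card {g \<in> G. R u v g}"
  shows "balanced_opposition (f ` A) (f ` F) R G'"
proof -
  have F_iff: "f u \<in> f ` F \<longleftrightarrow> u \<in> F" if "u \<in> A" for u
    using inj that \<open>F \<subseteq> A\<close> by (auto simp: inj_on_image_mem_iff)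
  show ?thesis
    unfolding balanced_opposition_def
  proof (intro conjI ballI impI)
    fix m m' assume "m \<in> f ` A" "m \<in> f ` F" "m' \<in> f ` A" "m' \<noteq> m"
    then obtain u u' where "u \<in> A" "u \<in> F" "u' \<in> A" "u' \<noteq> u" "m = f u" "m' = f u'"
      using F_iff by auto
    then show "card {g \<in> G'. R m m' g} = 1"
      using bal card_eq unfolding balanced_opposition_def by auto
  next
    fix m assume "m \<in> f ` A" "m \<notin> f ` F"
    then obtain u where u: "u \<in> A" "m = f u" "u \<notin> F" by auto
    then obtain u' where u': "u' \<in> A" "u' \<noteq> u" "u' \<notin> F" "card {g \<in> G. R u u' g} = 2"
        "\<forall>u'' \<in> A. u'' \<noteq> u \<and> u'' \<noteq> u' \<longrightarrow> card {g \<in> G. R u u'' g} = 1"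
      using bal unfolding balanced_opposition_def by blast
    show "\<exists>m' \<in> f ` A. m' \<noteq> m \<and> m' \<notin> f ` F \<and> card {g \<in> G'. R m m' g} = 2 \<and>
        (\<forall>m'' \<in> f ` A. m'' \<noteq> m \<and> m'' \<noteq> m' \<longrightarrow> card {g \<in> G'. R m m'' g} = 1)"
      using u u' F_iff card_eq inj by (intro bexI[of _ "f u'"]) (auto simp: inj_on_eq_iff)
  qed
qed

lemma game_players_subset:
  assumes "is_CMDRR_on A S G" "g \<in> G"
  shows "game_players g \<subseteq> A"
  using is_CMDRR_onD(2)[OF assms(1)] assms(2) by (cases g rule: game_cases) (auto simp: game_players_def)

lemma is_CMDRR_on_image:
  assumes H: "is_CMDRR_on A S G" and inj: "inj_on f A"
  shows "is_CMDRR_on (f ` A) (map_prod f f ` S) (map_game f ` G)"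
proof -
  note H_parts = is_CMDRR_onD[OF H]
  have players: "game_players g \<subseteq> A" if "g \<in> G" for g
    using game_players_subset[OF H that] .
  have "G \<subseteq> (A \<times> A) \<times> (A \<times> A)"
    using H_parts(2) by auto
  then have inj_games: "inj_on (map_game f) G"
    using inj_on_map_game[OF inj] inj_on_subset by blast
  have card_eq: "card {g \<in> map_game f ` G. Q (f u) (f v) g} = card {g \<in> G. Q u v g}"
    if "Q \<in> {partners_in, opp_mw_in, opp_men_in, opp_women_in}" "u \<in> A" "v \<in> A" for Q u v
    using that map_game_preds[OF inj players] by (intro card_image_Collect[OF inj_games]) auto
  have S_sub: "S \<subseteq> A \<times> A" "fst ` S \<subseteq> A" "snd ` S \<subseteq> A"
    using H_parts(3) by auto
  have spouse_iff: "(f u, f v) \<in> map_prod f f ` S \<longleftrightarrow> (u,v) \<in> S" if "u \<in> A" "v \<in> A" for u v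
    using that S_sub inj by (auto simp: inj_on_eq_iff)
  show ?thesis
    unfolding is_CMDRR_on_def
  proof (intro conjI)
    show "finite (map_game f ` G)"
      using H_parts(1) by simp
    show "\<forall>((a,b),(c,d)) \<in> map_game f ` G. a \<in> f ` A \<and> b \<in> f ` A \<and> c \<in> f ` A \<and> d \<in> f ` A \<and> a \<noteq> c \<and> b \<noteq> d"
      using H_parts(2) inj by (fastforce simp: map_game_def inj_on_eq_iff)
    show "map_prod f f ` S \<subseteq> f ` A \<times> f ` A"
      using S_sub by auto
    show "\<forall>(m,w) \<in> map_prod f f ` S. \<forall>(m',w') \<in> map_prod f f ` S. m = m' \<longleftrightarrow> w = w'"
    proof -
      have "f a = f c \<longleftrightarrow> f b = f d" if "(a,b) \<in> S" "(c,d) \<in> S" for a b c d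
      proof -
        have "a \<in> A" "b \<in> A" "c \<in> A" "d \<in> A"
          using that S_sub(1) by auto
        then show ?thesis
          using that H_parts(4) inj by (auto simp: inj_on_eq_iff)
      qed
      then show ?thesis by auto
    qed
    show "\<forall>(m,w) \<in> map_prod f f ` S. \<forall>g \<in> map_game f ` G. \<not> (plays_man m g \<and> plays_woman w g)"
    proof -
      have "\<not> (plays_man (f m) (map_game f g) \<and> plays_woman (f w) (map_game f g))"
        if "(m,w) \<in> S" "g \<in> G" for m w g
      proof -
        have "m \<in> A" "w \<in> A"
          using that(1) S_sub(1) by auto
        then show ?thesis
          using that H_parts(5) map_game_preds(5,6)[OF inj players[OF that(2)]] by blast
      qed
      then show ?thesis by auto
    qed
    show "\<forall>m \<in> f ` A. \<forall>w \<in> f ` A. (m,w) \<notin> map_prod f f ` S \<longrightarrow>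
        card {g \<in> map_game f ` G. partners_in m w g} = 1 \<and> card {g \<in> map_game f ` G. opp_mw_in m w g} = 1"
      using H_parts(6) card_eq spouse_iff by auto
    show "balanced_opposition (f ` A) (fst ` map_prod f f ` S) opp_men_in (map_game f ` G)"
      using balanced_opposition_image[OF H_parts(7) inj S_sub(2)] card_eq by (simp add: image_image)
    show "balanced_opposition (f ` A) (snd ` map_prod f f ` S) opp_women_in (map_game f ` G)"
      using balanced_opposition_image[OF H_parts(8) inj S_sub(3)] card_eq by (simp add: image_image)
  qed
qed

lemma CMDRR_exists_on:
  assumes "CMDRR_exists n k" "finite A" "card A = n"
  obtains S G where "is_CMDRR_on A S G" "card S = k"
proof -
  obtain S G where SG: "is_CMDRR_on {0..<n} S G" "card S = k"
    using assms(1) unfolding CMDRR_exists_def is_CMDRR_iff by blast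
  obtain f where f: "bij_betw f {0..<n} A"
    using ex_bij_betw_nat_finite[OF assms(2)] assms(3) by blast
  then have inj: "inj_on f {0..<n}" and img: "f ` {0..<n} = A"
    unfolding bij_betw_def by auto
  have "inj_on (map_prod f f) S"
    using map_prod_inj_on[OF inj inj] is_CMDRR_onD(3)[OF SG(1)] inj_on_subset by blast
  then have "card (map_prod f f ` S) = k"
    using SG(2) card_image by metis
  then show thesis
    using that is_CMDRR_on_image[OF SG(1) inj] img by simp
qed

lemma bij_betw_ex1: "bij_betw f A B \<Longrightarrow> b \<in> B \<Longrightarrow> \<exists>!a. a \<in> A \<and> f a = b"
  unfolding bij_betw_def inj_on_def by blast

locale holey_SOLS =
  fixes X :: "nat set" and I :: "'i set" and Hf :: "'i \<Rightarrow> nat set" and L :: "nat \<Rightarrow> nat \<Rightarrow> nat"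
  assumes HSOLS: "is_HSOLS X I Hf L"
begin

lemma finite_X: "finite X"
  and hole_subset: "t \<in> I \<Longrightarrow> Hf t \<subseteq> X"
  and holes_disjoint: "t \<in> I \<Longrightarrow> t' \<in> I \<Longrightarrow> t \<noteq> t' \<Longrightarrow> Hf t \<inter> Hf t' = {}"
  and holes_cover: "(\<Union>t \<in> I. Hf t) = X"
  and row_bij: "t \<in> I \<Longrightarrow> x \<in> Hf t \<Longrightarrow> bij_betw (L x) (X - Hf t) (X - Hf t)"
  and col_bij: "t \<in> I \<Longrightarrow> y \<in> Hf t \<Longrightarrow> bij_betw (\<lambda>x. L x y) (X - Hf t) (X - Hf t)"
  and orth_bij: "bij_betw (\<lambda>(x,y). (L x y, L y x))
       {(x,y). x \<in> X \<and> y \<in> X \<and> \<not> same_hole I Hf x y} {(u,v). u \<in> X \<and> v \<in> X \<and> \<not> same_hole I Hf u v}"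
  by (insert HSOLS, unfold is_HSOLS_def, elim conjE, blast+)

definition hole :: "nat \<Rightarrow> 'i" where
  "hole x = (THE t. t \<in> I \<and> x \<in> Hf t)"

lemma hole_eqI:
  assumes "t \<in> I" "x \<in> Hf t"
  shows "hole x = t"
  unfolding hole_def
proof (rule the_equality)
  show "t \<in> I \<and> x \<in> Hf t"
    using assms by simp
  fix t' assume "t' \<in> I \<and> x \<in> Hf t'"
  then show "t' = t"
    using holes_disjoint[of t' t] assms by blast
qed

lemma hole_in:
  assumes "x \<in> X"
  shows "hole x \<in> I" "x \<in> Hf (hole x)"
proof -
  obtain t where "t \<in> I" "x \<in> Hf t"
    using assms holes_cover by blast
  then show "hole x \<in> I" "x \<in> Hf (hole x)"
    using hole_eqI by simp_all
qed

lemma in_hole_iff: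
  assumes "x \<in> X"
  shows "z \<in> Hf (hole x) \<longleftrightarrow> z \<in> X \<and> hole z = hole x"
proof
  assume z: "z \<in> Hf (hole x)"
  show "z \<in> X \<and> hole z = hole x"
    using hole_subset[OF hole_in(1)[OF assms]] hole_eqI[OF hole_in(1)[OF assms] z] z by blast
next
  assume "z \<in> X \<and> hole z = hole x"
  then show "z \<in> Hf (hole x)"
    using hole_in(2)[of z] by simp
qed

lemma same_hole_iff:
  assumes "x \<in> X" "y \<in> X"
  shows "same_hole I Hf x y \<longleftrightarrow> hole x = hole y"
proof
  assume "same_hole I Hf x y"
  then obtain t where "t \<in> I" "x \<in> Hf t" "y \<in> Hf t"
    unfolding same_hole_def by blast
  then show "hole x = hole y"
    using hole_eqI by simp
next
  assume "hole x = hole y"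
  then show "same_hole I Hf x y"
    unfolding same_hole_def using hole_in[OF assms(1)] hole_in(2)[OF assms(2)] by auto
qed

definition cells :: "(nat \<times> nat) set" where
  "cells = {(x,y). x \<in> X \<and> y \<in> X \<and> hole x \<noteq> hole y}"

lemma cells_row: "x \<in> X \<Longrightarrow> (x,y) \<in> cells \<longleftrightarrow> y \<in> X - Hf (hole x)"
  unfolding cells_def using in_hole_iff by auto

lemma cells_col: "y \<in> X \<Longrightarrow> (x,y) \<in> cells \<longleftrightarrow> x \<in> X - Hf (hole y)"
  unfolding cells_def using in_hole_iff by auto

lemma cells_swap: "(x,y) \<in> cells \<Longrightarrow> (y,x) \<in> cells"
  unfolding cells_def by auto

lemma orth_bij_cells: "bij_betw (\<lambda>(x,y). (L x y, L y x)) cells cells"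
proof -
  have "{(x,y). x \<in> X \<and> y \<in> X \<and> \<not> same_hole I Hf x y} = cells"
    unfolding cells_def using same_hole_iff by auto
  then show ?thesis
    using orth_bij by simp
qed

lemma cell_entry:
  assumes xy: "(x,y) \<in> cells"
  shows "(x, L x y) \<in> cells" "(y, L x y) \<in> cells" "(L x y, L y x) \<in> cells"
proof -
  have x: "x \<in> X" and y: "y \<in> X"
    using xy unfolding cells_def by auto
  have "L x y \<in> X - Hf (hole x)"
    using row_bij[OF hole_in[OF x]] xy cells_row[OF x] unfolding bij_betw_def by blast
  then show "(x, L x y) \<in> cells"
    using cells_row[OF x] by blast
  have "L x y \<in> X - Hf (hole y)"
    using col_bij[OF hole_in[OF y]] xy cells_col[OF y] unfolding bij_betw_def by blast
  then show "(y, L x y) \<in> cells"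
    using cells_col[OF y] cells_swap by blast
  show "(L x y, L y x) \<in> cells"
    using xy orth_bij_cells unfolding bij_betw_def by auto
qed

lemma row_ex1:
  assumes "(x,w) \<in> cells"
  shows "\<exists>!y. (x,y) \<in> cells \<and> L x y = w"
proof -
  have x: "x \<in> X"
    using assms unfolding cells_def by auto
  show ?thesis
    using bij_betw_ex1[OF row_bij[OF hole_in[OF x]]] assms unfolding cells_row[OF x] by blast
qed

lemma col_ex1:
  assumes "(w,y) \<in> cells"
  shows "\<exists>!x. (x,y) \<in> cells \<and> L x y = w"
proof -
  have y: "y \<in> X"
    using assms unfolding cells_def by auto
  show ?thesis
    using bij_betw_ex1[OF col_bij[OF hole_in[OF y]]] assms unfolding cells_col[OF y] by blast
qed

lemma exists_hole_fillings:
  assumes "\<forall>t \<in> I. CMDRR_exists (card (Hf t)) (k t)"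
  obtains S G where "\<forall>t \<in> I. is_CMDRR_on (Hf t) (S t) (G t) \<and> card (S t) = k t"
proof -
  have "\<forall>t \<in> I. \<exists>St Gt. is_CMDRR_on (Hf t) St Gt \<and> card St = k t"
  proof
    fix t assume t: "t \<in> I"
    obtain St Gt where "is_CMDRR_on (Hf t) St Gt" "card St = k t"
      using CMDRR_exists_on assms t finite_subset[OF hole_subset[OF t] finite_X] by blast
    then show "\<exists>St Gt. is_CMDRR_on (Hf t) St Gt \<and> card St = k t"
      by blast
  qed
  from bchoice[OF this] obtain S where "\<forall>t \<in> I. \<exists>Gt. is_CMDRR_on (Hf t) (S t) Gt \<and> card (S t) = k t" ..
  from bchoice[OF this] obtain G where "\<forall>t \<in> I. is_CMDRR_on (Hf t) (S t) (G t) \<and> card (S t) = k t" ..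
  then show thesis
    using that by blast
qed

text \<open>Listing the smaller man first makes the game independent of the order of the two cells.\<close>

definition cell_game :: "nat \<Rightarrow> nat \<Rightarrow> game" where
  "cell_game x y = (if x < y then ((x, L x y), (y, L y x)) else ((y, L y x), (x, L x y)))"

lemma cell_game_commute: "cell_game x y = cell_game y x"
  unfolding cell_game_def by auto

lemma cell_game_preds:
  "partners_in u v (cell_game x y) \<longleftrightarrow> (u = x \<and> v = L x y) \<or> (u = y \<and> v = L y x)"
  "opp_mw_in u v (cell_game x y) \<longleftrightarrow> (u = x \<and> v = L y x) \<or> (u = y \<and> v = L x y)"
  "opp_men_in u v (cell_game x y) \<longleftrightarrow> (u = x \<and> v = y) \<or> (u = y \<and> v = x)"
  "opp_women_in u v (cell_game x y) \<longleftrightarrow> (u = L x y \<and> v = L y x) \<or> (u = L y x \<and> v = L x y)"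
  "plays_man u (cell_game x y) \<longleftrightarrow> u = x \<or> u = y"
  "plays_woman u (cell_game x y) \<longleftrightarrow> u = L x y \<or> u = L y x"
  unfolding cell_game_def partners_in_def opp_mw_in_def opp_men_in_def opp_women_in_def
    plays_man_def plays_woman_def by auto

lemma cell_game_links_cells:
  assumes "(x,y) \<in> cells" "Q \<in> {partners_in, opp_mw_in, opp_men_in, opp_women_in}"
    and "Q u v (cell_game x y)"
  shows "(u,v) \<in> cells"
  using assms cell_entry[OF assms(1)] cell_entry[OF cells_swap[OF assms(1)]] cells_swap
  by (auto simp: cell_game_preds)

lemma cell_game_separates_spouses:
  assumes "(x,y) \<in> cells" "plays_man m (cell_game x y)" "plays_woman w (cell_game x y)"
  shows "(m,w) \<in> cells"
  using assms cell_entry[OF assms(1)] cell_entry[OF cells_swap[OF assms(1)]] cells_swap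
  by (auto simp: cell_game_preds)

lemma cell_game_wf:
  assumes "(x,y) \<in> cells" "cell_game x y = ((a,b),(c,d))"
  shows "a \<in> X \<and> b \<in> X \<and> c \<in> X \<and> d \<in> X \<and> a \<noteq> c \<and> b \<noteq> d"
  using assms cell_entry[OF assms(1)] cell_entry[OF cells_swap[OF assms(1)]]
  unfolding cell_game_def cells_def by (auto split: if_splits)

definition outer_games :: "game set" where
  "outer_games = (\<lambda>(x,y). cell_game x y) ` cells"

lemma card_outer_games_eq_1:
  assumes "(x0,y0) \<in> cells" "Q (cell_game x0 y0)"
    and "\<And>x y. (x,y) \<in> cells \<Longrightarrow> Q (cell_game x y) \<Longrightarrow> (x,y) = (x0,y0) \<or> (x,y) = (y0,x0)"
  shows "card {g \<in> outer_games. Q g} = 1"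
proof -
  have "{g \<in> outer_games. Q g} = {cell_game x0 y0}"
    using assms cell_game_commute unfolding outer_games_def by fastforce
  then show ?thesis by simp
qed

lemma card_outer_partners:
  assumes "(u,w) \<in> cells"
  shows "card {g \<in> outer_games. partners_in u w g} = 1"
proof -
  obtain y0 where y0: "(u,y0) \<in> cells" "L u y0 = w"
    and unique: "\<And>y. (u,y) \<in> cells \<Longrightarrow> L u y = w \<Longrightarrow> y = y0"
    using row_ex1[OF assms] by blast
  show ?thesis
  proof (rule card_outer_games_eq_1[OF y0(1)])
    show "partners_in u w (cell_game u y0)"
      using y0(2) by (simp add: cell_game_preds)
    fix x y assume xy: "(x,y) \<in> cells" "partners_in u w (cell_game x y)"
    then consider "u = x" "w = L x y" | "u = y" "w = L y x"
      by (auto simp: cell_game_preds)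
    then show "(x,y) = (u,y0) \<or> (x,y) = (y0,u)"
      using unique xy(1) cells_swap[OF xy(1)] by cases auto
  qed
qed

lemma card_outer_opp_mw:
  assumes "(u,w) \<in> cells"
  shows "card {g \<in> outer_games. opp_mw_in u w g} = 1"
proof -
  obtain x0 where x0: "(x0,u) \<in> cells" "L x0 u = w"
    and unique: "\<And>x. (x,u) \<in> cells \<Longrightarrow> L x u = w \<Longrightarrow> x = x0"
    using col_ex1[OF cells_swap[OF assms]] by blast
  show ?thesis
  proof (rule card_outer_games_eq_1[OF x0(1)])
    show "opp_mw_in u w (cell_game x0 u)"
      using x0(2) by (simp add: cell_game_preds)
    fix x y assume xy: "(x,y) \<in> cells" "opp_mw_in u w (cell_game x y)"
    then consider "u = x" "w = L y x" | "u = y" "w = L x y"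
      by (auto simp: cell_game_preds)
    then show "(x,y) = (x0,u) \<or> (x,y) = (u,x0)"
      using unique xy(1) cells_swap[OF xy(1)] by cases auto
  qed
qed

lemma card_outer_opp_men:
  assumes "(u,v) \<in> cells"
  shows "card {g \<in> outer_games. opp_men_in u v g} = 1"
  using assms by (intro card_outer_games_eq_1[OF assms]) (auto simp: cell_game_preds)

lemma card_outer_opp_women:
  assumes "(u,v) \<in> cells"
  shows "card {g \<in> outer_games. opp_women_in u v g} = 1"
proof -
  obtain p where p: "p \<in> cells" "(\<lambda>(x,y). (L x y, L y x)) p = (u,v)"
    and unique_p: "\<And>q. q \<in> cells \<Longrightarrow> (\<lambda>(x,y). (L x y, L y x)) q = (u,v) \<Longrightarrow> q = p"
    using bij_betw_ex1[OF orth_bij_cells assms] by blast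
  obtain x0 y0 where p_eq: "p = (x0,y0)"
    by fastforce
  have p0: "(x0,y0) \<in> cells" "L x0 y0 = u" "L y0 x0 = v"
    using p unfolding p_eq by auto
  have unique: "(x,y) = (x0,y0)" if "(x,y) \<in> cells" "L x y = u" "L y x = v" for x y
    using unique_p[of "(x,y)"] that unfolding p_eq by simp
  show ?thesis
  proof (rule card_outer_games_eq_1[OF p0(1)])
    show "opp_women_in u v (cell_game x0 y0)"
      using p0 by (simp add: cell_game_preds)
    fix x y assume xy: "(x,y) \<in> cells" "opp_women_in u v (cell_game x y)"
    then consider "u = L x y" "v = L y x" | "u = L y x" "v = L x y"
      by (auto simp: cell_game_preds)
    then show "(x,y) = (x0,y0) \<or> (x,y) = (y0,x0)"
      using unique xy(1) cells_swap[OF xy(1)] by cases auto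
  qed
qed

end

locale HSOLS_filling = holey_SOLS X I Hf L
  for X :: "nat set" and I :: "'i set" and Hf :: "'i \<Rightarrow> nat set" and L :: "nat \<Rightarrow> nat \<Rightarrow> nat" +
  fixes S :: "'i \<Rightarrow> (nat \<times> nat) set" and G :: "'i \<Rightarrow> game set"
  assumes finite_I: "finite I"
    and hole_CMDRR: "t \<in> I \<Longrightarrow> is_CMDRR_on (Hf t) (S t) (G t)"
begin

definition spouses :: "(nat \<times> nat) set" where
  "spouses = (\<Union>t \<in> I. S t)"

definition inner_games :: "game set" where
  "inner_games = (\<Union>t \<in> I. G t)"

definition games :: "game set" where
  "games = inner_games \<union> outer_games"

lemma spouses_in_hole: "t \<in> I \<Longrightarrow> S t \<subseteq> Hf t \<times> Hf t"
  using is_CMDRR_onD(3)[OF hole_CMDRR] .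

lemma inner_game_in_hole: "t \<in> I \<Longrightarrow> g \<in> G t \<Longrightarrow> game_players g \<subseteq> Hf t"
  using game_players_subset[OF hole_CMDRR] .

lemma mem_spouses:
  assumes "x \<in> X" "x = m \<or> x = w"
  shows "(m,w) \<in> spouses \<longleftrightarrow> (m,w) \<in> S (hole x)"
proof
  assume "(m,w) \<in> spouses"
  then obtain t where t: "t \<in> I" "(m,w) \<in> S t"
    unfolding spouses_def by blast
  then have "hole x = t"
    using spouses_in_hole[OF t(1)] t(2) hole_eqI[OF t(1)] assms(2) by blast
  then show "(m,w) \<in> S (hole x)"
    using t by simp
next
  assume "(m,w) \<in> S (hole x)"
  then show "(m,w) \<in> spouses"
    unfolding spouses_def using hole_in(1)[OF assms(1)] by blast
qed

lemma games_related_in_hole: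
  assumes "u \<in> X" "v \<in> Hf (hole u)" "Q \<in> {partners_in, opp_mw_in, opp_men_in, opp_women_in}"
  shows "{g \<in> games. Q u v g} = {g \<in> G (hole u). Q u v g}"
proof -
  have same_hole: "hole u = hole v"
    using in_hole_iff[OF assms(1)] assms(2) by simp
  have inner: "g \<in> G (hole u)" if "t \<in> I" "g \<in> G t" "Q u v g" for t g
  proof -
    have "u \<in> Hf t"
      using game_players_related[OF assms(3) that(3)] inner_game_in_hole[OF that(1,2)] by blast
    then show ?thesis
      using hole_eqI[OF that(1)] that(2) by simp
  qed
  have outer: "\<not> Q u v g" if "g \<in> outer_games" for g
  proof
    assume "Q u v g"
    obtain x y where "(x,y) \<in> cells" "g = cell_game x y"
      using \<open>g \<in> outer_games\<close> unfolding outer_games_def by auto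
    then have "(u,v) \<in> cells"
      using cell_game_links_cells assms(3) \<open>Q u v g\<close> by blast
    then show False
      using same_hole unfolding cells_def by simp
  qed
  show ?thesis
  proof (intro equalityI subsetI)
    fix g assume "g \<in> {g \<in> games. Q u v g}"
    then show "g \<in> {g \<in> G (hole u). Q u v g}"
      using inner outer unfolding games_def inner_games_def by blast
  next
    fix g assume "g \<in> {g \<in> G (hole u). Q u v g}"
    then show "g \<in> {g \<in> games. Q u v g}"
      using hole_in(1)[OF assms(1)] unfolding games_def inner_games_def by blast
  qed
qed

lemma card_games_across_holes:
  assumes "u \<in> X" "v \<in> X" "v \<notin> Hf (hole u)"
    and Q: "Q \<in> {partners_in, opp_mw_in, opp_men_in, opp_women_in}"
  shows "card {g \<in> games. Q u v g} = 1"
proof -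
  have uv: "(u,v) \<in> cells"
    using in_hole_iff[OF assms(1)] assms(1-3) unfolding cells_def by auto
  have "\<not> Q u v g" if g: "g \<in> inner_games" for g
  proof
    assume "Q u v g"
    obtain t where "t \<in> I" "g \<in> G t"
      using g unfolding inner_games_def by blast
    then have "u \<in> Hf t" "v \<in> Hf t"
      using game_players_related[OF Q \<open>Q u v g\<close>] inner_game_in_hole by blast+
    then show False
      using uv hole_eqI[OF \<open>t \<in> I\<close>] unfolding cells_def by auto
  qed
  then have "{g \<in> games. Q u v g} = {g \<in> outer_games. Q u v g}"
    unfolding games_def by blast
  then show ?thesis
    using uv Q card_outer_partners card_outer_opp_mw card_outer_opp_men card_outer_opp_women
    by auto
qed

lemma balanced_opposition_games:
  assumes R: "R \<in> {opp_men_in, opp_women_in}"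
    and F: "\<And>m. m \<in> X \<Longrightarrow> m \<in> F \<longleftrightarrow> m \<in> F' (hole m)"
    and local: "\<And>t. t \<in> I \<Longrightarrow> balanced_opposition (Hf t) (F' t) R (G t)"
  shows "balanced_opposition X F R games"
proof -
  have R': "R \<in> {partners_in, opp_mw_in, opp_men_in, opp_women_in}"
    using R by blast
  have local_hole: "balanced_opposition (Hf (hole m)) (F' (hole m)) R (G (hole m))" if "m \<in> X" for m
    using local[OF hole_in(1)[OF that]] .
  show ?thesis
    unfolding balanced_opposition_def
  proof (intro conjI ballI impI)
    fix m m' assume m: "m \<in> X" "m \<in> F" and m': "m' \<in> X" "m' \<noteq> m"
    show "card {g \<in> games. R m m' g} = 1"
    proof (cases "m' \<in> Hf (hole m)")
      case True
      have "m \<in> F' (hole m)"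
        using F m by blast
      then show ?thesis
        using local_hole[OF m(1)] hole_in(2)[OF m(1)] True m'(2) games_related_in_hole[OF m(1) True R']
        unfolding balanced_opposition_def by auto
    next
      case False
      then show ?thesis
        using card_games_across_holes[OF m(1) m'(1) _ R'] by blast
    qed
  next
    fix m assume m: "m \<in> X" "m \<notin> F"
    have "m \<notin> F' (hole m)"
      using F m by blast
    then obtain m' where m': "m' \<in> Hf (hole m)" "m' \<noteq> m" "m' \<notin> F' (hole m)"
        "card {g \<in> G (hole m). R m m' g} = 2"
      and others: "\<forall>m'' \<in> Hf (hole m). m'' \<noteq> m \<and> m'' \<noteq> m' \<longrightarrow>
        card {g \<in> G (hole m). R m m'' g} = 1"
      using local_hole[OF m(1)] hole_in(2)[OF m(1)] unfolding balanced_opposition_def by blast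
    have m'_X: "m' \<in> X" and hole_m': "hole m' = hole m"
      using in_hole_iff[OF m(1)] m'(1) by blast+
    show "\<exists>m' \<in> X. m' \<noteq> m \<and> m' \<notin> F \<and> card {g \<in> games. R m m' g} = 2 \<and>
        (\<forall>m'' \<in> X. m'' \<noteq> m \<and> m'' \<noteq> m' \<longrightarrow> card {g \<in> games. R m m'' g} = 1)"
    proof (intro bexI conjI ballI impI)
      show "m' \<notin> F"
        using F[OF m'_X] hole_m' m'(3) by simp
      show "card {g \<in> games. R m m' g} = 2"
        using games_related_in_hole[OF m(1) m'(1) R'] m'(4) by simp
      fix m'' assume "m'' \<in> X" "m'' \<noteq> m \<and> m'' \<noteq> m'"
      then show "card {g \<in> games. R m m'' g} = 1"
        using games_related_in_hole[OF m(1) _ R'] others card_games_across_holes[OF m(1) _ _ R']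
        by (cases "m'' \<in> Hf (hole m)") auto
    qed (use m' m'_X in auto)
  qed
qed

lemma finite_games: "finite games"
proof -
  have "finite inner_games"
    unfolding inner_games_def using finite_I is_CMDRR_onD(1)[OF hole_CMDRR] by blast
  moreover have "finite cells"
    using finite_X unfolding cells_def by (auto intro: finite_subset[of _ "X \<times> X"])
  ultimately show ?thesis
    unfolding games_def outer_games_def by blast
qed

lemma games_wf: "\<forall>((a,b),(c,d)) \<in> games. a \<in> X \<and> b \<in> X \<and> c \<in> X \<and> d \<in> X \<and> a \<noteq> c \<and> b \<noteq> d"
proof (intro ballI, clarify)
  fix a b c d assume g: "((a,b),(c,d)) \<in> games"
  show "a \<in> X \<and> b \<in> X \<and> c \<in> X \<and> d \<in> X \<and> a \<noteq> c \<and> b \<noteq> d"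
  proof (cases "((a,b),(c,d)) \<in> inner_games")
    case True
    then obtain t where "t \<in> I" "((a,b),(c,d)) \<in> G t"
      unfolding inner_games_def by blast
    then show ?thesis
      using is_CMDRR_onD(2)[OF hole_CMDRR] hole_subset by fastforce
  next
    case False
    then obtain x y where "(x,y) \<in> cells" "cell_game x y = ((a,b),(c,d))"
      using g unfolding games_def outer_games_def by auto
    then show ?thesis
      using cell_game_wf by blast
  qed
qed

lemma spouses_subset: "spouses \<subseteq> X \<times> X"
  unfolding spouses_def using spouses_in_hole hole_subset by blast

lemma spouses_matching: "\<forall>(m,w) \<in> spouses. \<forall>(m',w') \<in> spouses. m = m' \<longleftrightarrow> w = w'"
proof (clarify)
  fix m w m' w' assume "(m,w) \<in> spouses" "(m',w') \<in> spouses"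
  then obtain t t' where t: "t \<in> I" "(m,w) \<in> S t" and t': "t' \<in> I" "(m',w') \<in> S t'"
    unfolding spouses_def by blast
  show "m = m' \<longleftrightarrow> w = w'"
  proof (cases "t = t'")
    case True
    then show ?thesis
      using is_CMDRR_onD(4)[OF hole_CMDRR[OF t(1)]] t t' by blast
  next
    case False
    then show ?thesis
      using spouses_in_hole[OF t(1)] t(2) spouses_in_hole[OF t'(1)] t'(2)
        holes_disjoint[OF t(1) t'(1)] by blast
  qed
qed

lemma spouses_never_meet: "\<forall>(m,w) \<in> spouses. \<forall>g \<in> games. \<not> (plays_man m g \<and> plays_woman w g)"
proof (clarify)
  fix m w g assume mw: "(m,w) \<in> spouses" and g: "g \<in> games" "plays_man m g" "plays_woman w g"
  obtain t where t: "t \<in> I" "(m,w) \<in> S t"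
    using mw unfolding spouses_def by blast
  show False
  proof (cases "g \<in> inner_games")
    case True
    then obtain t' where t': "t' \<in> I" "g \<in> G t'"
      unfolding inner_games_def by blast
    have "m \<in> Hf t'"
      using game_players_plays(1)[OF g(2)] inner_game_in_hole[OF t'] by blast
    then have "t' = t"
      using spouses_in_hole[OF t(1)] t(2) holes_disjoint[OF t'(1) t(1)] by blast
    then show False
      using is_CMDRR_onD(5)[OF hole_CMDRR[OF t(1)]] t t' g by blast
  next
    case False
    then obtain x y where "(x,y) \<in> cells" "g = cell_game x y"
      using g unfolding games_def outer_games_def by auto
    then have "(m,w) \<in> cells"
      using cell_game_separates_spouses g by blast
    then show False
      using spouses_in_hole[OF t(1)] t(2) hole_eqI[OF t(1)] unfolding cells_def by auto
  qed
qed

lemma games_mixed_pairs: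
  "\<forall>m \<in> X. \<forall>w \<in> X. (m,w) \<notin> spouses \<longrightarrow>
     card {g \<in> games. partners_in m w g} = 1 \<and> card {g \<in> games. opp_mw_in m w g} = 1"
proof (intro ballI impI)
  fix m w assume m: "m \<in> X" and w: "w \<in> X" and not_spouses: "(m,w) \<notin> spouses"
  show "card {g \<in> games. partners_in m w g} = 1 \<and> card {g \<in> games. opp_mw_in m w g} = 1"
  proof (cases "w \<in> Hf (hole m)")
    case True
    have "(m,w) \<notin> S (hole m)"
      using not_spouses mem_spouses[OF m] by auto
    then show ?thesis
      using games_related_in_hole[OF m True] is_CMDRR_onD(6)[OF hole_CMDRR[OF hole_in(1)[OF m]]]
        hole_in(2)[OF m] True by auto
  next
    case False
    then show ?thesis
      using card_games_across_holes[OF m w] by auto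
  qed
qed

lemma balanced_opposition_men: "balanced_opposition X (fst ` spouses) opp_men_in games"
proof (rule balanced_opposition_games)
  show "m \<in> fst ` spouses \<longleftrightarrow> m \<in> fst ` S (hole m)" if "m \<in> X" for m
    using mem_spouses[OF that] by force
qed (use is_CMDRR_onD(7)[OF hole_CMDRR] in auto)

lemma balanced_opposition_women: "balanced_opposition X (snd ` spouses) opp_women_in games"
proof (rule balanced_opposition_games)
  show "w \<in> snd ` spouses \<longleftrightarrow> w \<in> snd ` S (hole w)" if "w \<in> X" for w
    using mem_spouses[OF that] by force
qed (use is_CMDRR_onD(8)[OF hole_CMDRR] in auto)

lemma is_CMDRR_on_games: "is_CMDRR_on X spouses games"
  unfolding is_CMDRR_on_def
  using finite_games games_wf spouses_subset spouses_matching spouses_never_meet games_mixed_pairs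
    balanced_opposition_men balanced_opposition_women
  by (intro conjI)

lemma card_spouses: "card spouses = (\<Sum>t \<in> I. card (S t))"
  unfolding spouses_def
proof (rule card_UN_disjoint[OF finite_I])
  show "\<forall>t \<in> I. finite (S t)"
    using finite_X hole_subset spouses_in_hole by (meson finite_SigmaI finite_subset)
  show "\<forall>t \<in> I. \<forall>t' \<in> I. t \<noteq> t' \<longrightarrow> S t \<inter> S t' = {}"
    using spouses_in_hole holes_disjoint by blast
qed

end

theorem theorem1:
  fixes k :: nat and h nn :: "nat \<Rightarrow> nat" and m :: "nat \<Rightarrow> nat \<Rightarrow> nat"
  assumes "HSOLS_type_exists k h nn"
    and "\<forall>i \<in> {1..k}. \<forall>j \<in> {1..nn i}. CMDRR_exists (h i) (m i j)"
  shows "CMDRR_exists (\<Sum>i=1..k. nn i * h i) (\<Sum>i=1..k. \<Sum>j=1..nn i. m i j)"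
proof -
  let ?N = "\<Sum>i=1..k. nn i * h i"
  let ?I = "{(i,j). i \<in> {1..k} \<and> j \<in> {1..nn i}}"
  have I_eq: "?I = Sigma {1..k} (\<lambda>i. {1..nn i})"
    by auto
  obtain Hf L where HSOLS: "is_HSOLS {0..<?N} ?I Hf L"
    and hole_card: "\<forall>i \<in> {1..k}. \<forall>j \<in> {1..nn i}. card (Hf (i,j)) = h i"
    using assms(1) unfolding HSOLS_type_exists_def by blast
  interpret holey_SOLS "{0..<?N}" ?I Hf L
    using HSOLS by unfold_locales
  have "\<forall>t \<in> ?I. CMDRR_exists (card (Hf t)) (m (fst t) (snd t))"
    using assms(2) hole_card by auto
  then obtain S G where SG: "\<forall>t \<in> ?I. is_CMDRR_on (Hf t) (S t) (G t) \<and> card (S t) = m (fst t) (snd t)"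
    by (rule exists_hole_fillings)
  interpret HSOLS_filling "{0..<?N}" ?I Hf L S G
  proof
    show "finite ?I"
      unfolding I_eq by simp
    show "is_CMDRR_on (Hf t) (S t) (G t)" if "t \<in> ?I" for t
      using SG that by blast
  qed
  have "card spouses = (\<Sum>t \<in> ?I. m (fst t) (snd t))"
    unfolding card_spouses using SG by (intro sum.cong) auto
  also have "\<dots> = (\<Sum>i=1..k. \<Sum>j=1..nn i. m i j)"
    unfolding I_eq by (subst sum.Sigma) (auto simp: split_def)
  finally show ?thesis
    unfolding CMDRR_exists_def is_CMDRR_iff using is_CMDRR_on_games by blast
qed

end
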